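(* For any variety $\mathcal{V}$ of $\Omega$-algebras, $\mathcal{V}\circ\mathcal{S}\subseteq\mathcal{V}^p$.
   Context: Standing conventions: $\Omega$-algebras are of a plural similarity type (no nullary operation symbols, at least one operation symbol of arity $\ge2$). $T_n$ is the set of $\Omega$-terms in $x_1,\dots,x_n$ in which all $n$ variables occur. An identity is regular if the same variables occur on both sides. $\mathcal{S}$ is the variety of $\Omega$-algebras satisfying all regular identities. $\mathcal{V}\circ\mathcal{S}$ is the class of $\Omega$-algebras $A$ having a congruence $\theta$ with $A/\theta\in\mathcal{S}$ and every $\theta$-class (a subalgebra) in $\mathcal{V}$. Prolongation: for an identity $\sigma$ of the form $u(y_1,\dots,y_n)=v(y_1,\dots,y_n)$ and $m\ge1$, $\sigma^p_m$ is the set of identities $u(r_1,\dots,r_n)=v(r_1,\dots,r_n)$ obtained by substituting $r_i(x_1,\dots,x_m)$ for $y_i$, with $r_i$ ranging over $T_m$; $\sigma^p=\bigcup_m\sigma^p_m$; $\Sigma^p=\bigcup_{\sigma\in\Sigma}\sigma^p$. $\mathcal{V}^p$ is the variety defined by $\mathrm{Id}(\mathcal{V})^p$, where $\mathrm{Id}(\mathcal{V})$ is the set of all identities holding in $\mathcal{V}$. *)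

theory Defs
  imports Main
begin

datatype 'f trm = Var nat | Fn 'f "'f trm list"

definition plural :: "('f \<Rightarrow> nat) \<Rightarrow> bool" where
  "plural ar \<longleftrightarrow> (\<forall>f. ar f \<noteq> 0) \<and> (\<exists>f. 2 \<le> ar f)"

fun wf_trm :: "('f \<Rightarrow> nat) \<Rightarrow> 'f trm \<Rightarrow> bool" where
  "wf_trm ar (Var i) = True"
| "wf_trm ar (Fn f ts) = (length ts = ar f \<and> (\<forall>t\<in>set ts. wf_trm ar t))"

fun vars :: "'f trm \<Rightarrow> nat set" where
  "vars (Var i) = {i}"
| "vars (Fn f ts) = (\<Union>t\<in>set ts. vars t)"

text \<open>T_n: terms in the variables x_1,...,x_n (encoded as Var 0, ..., Var (n-1))
  in which all n variables occur.\<close>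
definition T :: "('f \<Rightarrow> nat) \<Rightarrow> nat \<Rightarrow> 'f trm set" where
  "T ar n = {t. wf_trm ar t \<and> vars t = {..<n}}"

fun subst :: "(nat \<Rightarrow> 'f trm) \<Rightarrow> 'f trm \<Rightarrow> 'f trm" where
  "subst \<rho> (Var i) = \<rho> i"
| "subst \<rho> (Fn f ts) = Fn f (map (subst \<rho>) ts)"

type_synonym 'f identity = "'f trm \<times> 'f trm"

definition wf_id :: "('f \<Rightarrow> nat) \<Rightarrow> 'f identity \<Rightarrow> bool" where
  "wf_id ar e \<longleftrightarrow> wf_trm ar (fst e) \<and> wf_trm ar (snd e)"

definition regular :: "'f identity \<Rightarrow> bool" where
  "regular e \<longleftrightarrow> vars (fst e) = vars (snd e)"

definition algebra :: "('f \<Rightarrow> nat) \<Rightarrow> 'a set \<Rightarrow> ('f \<Rightarrow> 'a list \<Rightarrow> 'a) \<Rightarrow> bool" where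
  "algebra ar A F \<longleftrightarrow>
     (\<forall>f xs. length xs = ar f \<and> set xs \<subseteq> A \<longrightarrow> F f xs \<in> A)"

fun eval :: "('f \<Rightarrow> 'a list \<Rightarrow> 'a) \<Rightarrow> (nat \<Rightarrow> 'a) \<Rightarrow> 'f trm \<Rightarrow> 'a" where
  "eval F \<sigma> (Var i) = \<sigma> i"
| "eval F \<sigma> (Fn f ts) = F f (map (eval F \<sigma>) ts)"

definition satisfies :: "'a set \<Rightarrow> ('f \<Rightarrow> 'a list \<Rightarrow> 'a) \<Rightarrow> 'f identity \<Rightarrow> bool" where
  "satisfies A F e \<longleftrightarrow>
     (\<forall>\<sigma>. (\<forall>i. \<sigma> i \<in> A) \<longrightarrow> eval F \<sigma> (fst e) = eval F \<sigma> (snd e))"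

definition models :: "'a set \<Rightarrow> ('f \<Rightarrow> 'a list \<Rightarrow> 'a) \<Rightarrow> 'f identity set \<Rightarrow> bool" where
  "models A F \<Sigma> \<longleftrightarrow> (\<forall>e\<in>\<Sigma>. satisfies A F e)"

definition in_S :: "('f \<Rightarrow> nat) \<Rightarrow> 'a set \<Rightarrow> ('f \<Rightarrow> 'a list \<Rightarrow> 'a) \<Rightarrow> bool" where
  "in_S ar A F \<longleftrightarrow> algebra ar A F \<and>
     (\<forall>e. wf_id ar e \<and> regular e \<longrightarrow> satisfies A F e)"

definition congruence :: "('f \<Rightarrow> nat) \<Rightarrow> 'a set \<Rightarrow> ('f \<Rightarrow> 'a list \<Rightarrow> 'a) \<Rightarrow> 'a rel \<Rightarrow> bool" where
  "congruence ar A F \<theta> \<longleftrightarrow> equiv A \<theta> \<and>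
     (\<forall>f xs ys. length xs = ar f \<and> length ys = ar f \<and> set xs \<subseteq> A \<and> set ys \<subseteq> A \<and>
        (\<forall>i<ar f. (xs ! i, ys ! i) \<in> \<theta>) \<longrightarrow> (F f xs, F f ys) \<in> \<theta>)"

text \<open>Operations of the quotient algebra A/theta (well defined on classes
  when theta is a congruence).\<close>
definition quot_ops :: "'a rel \<Rightarrow> ('f \<Rightarrow> 'a list \<Rightarrow> 'a) \<Rightarrow> 'f \<Rightarrow> 'a set list \<Rightarrow> 'a set" where
  "quot_ops \<theta> F f Xs = \<theta> `` {F f (map (\<lambda>X. SOME x. x \<in> X) Xs)}"

text \<open>The variety V is presented as Mod Sigma for a set Sigma of identities.\<close>
definition in_Var :: "('f \<Rightarrow> nat) \<Rightarrow> 'f identity set \<Rightarrow> 'a set \<Rightarrow> ('f \<Rightarrow> 'a list \<Rightarrow> 'a) \<Rightarrow> bool" where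
  "in_Var ar \<Sigma> A F \<longleftrightarrow> algebra ar A F \<and> models A F \<Sigma>"

definition in_VoS :: "('f \<Rightarrow> nat) \<Rightarrow> 'f identity set \<Rightarrow> 'a set \<Rightarrow> ('f \<Rightarrow> 'a list \<Rightarrow> 'a) \<Rightarrow> bool" where
  "in_VoS ar \<Sigma> A F \<longleftrightarrow> algebra ar A F \<and>
     (\<exists>\<theta>. congruence ar A F \<theta> \<and> in_S ar (A // \<theta>) (quot_ops \<theta> F) \<and>
          (\<forall>X\<in>A // \<theta>. in_Var ar \<Sigma> X F))"

text \<open>Id(V): identities holding in every member of V (members with carrier in type 'a).\<close>
definition Id_V :: "('f \<Rightarrow> nat) \<Rightarrow> 'f identity set \<Rightarrow> 'a itself \<Rightarrow> 'f identity set" where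
  "Id_V ar \<Sigma> _ = {e. wf_id ar e \<and>
     (\<forall>(B::'a set) G. in_Var ar \<Sigma> B G \<longrightarrow> satisfies B G e)}"

definition prolong_m :: "('f \<Rightarrow> nat) \<Rightarrow> nat \<Rightarrow> 'f identity \<Rightarrow> 'f identity set" where
  "prolong_m ar m e = {(subst \<rho> (fst e), subst \<rho> (snd e)) | \<rho>. \<forall>i. \<rho> i \<in> T ar m}"

definition prolong :: "('f \<Rightarrow> nat) \<Rightarrow> 'f identity set \<Rightarrow> 'f identity set" where
  "prolong ar \<Sigma> = (\<Union>e\<in>\<Sigma>. \<Union>m\<in>{1..}. prolong_m ar m e)"

definition in_Vp :: "('f \<Rightarrow> nat) \<Rightarrow> 'f identity set \<Rightarrow> 'a set \<Rightarrow> ('f \<Rightarrow> 'a list \<Rightarrow> 'a) \<Rightarrow> bool" where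
  "in_Vp ar \<Sigma> A F \<longleftrightarrow> algebra ar A F \<and> models A F (prolong ar (Id_V ar \<Sigma> TYPE('a)))"

end

theory Submission
  imports Defs
begin

text \<open>Let \<theta> witness A \<in> V \<circ> S. Since the quotient map is a homomorphism and
  A/\<theta> satisfies every regular identity, terms r_1, ..., r_n with the same
  variables take values in a single \<theta>-class under any assignment into A. That
  class lies in V, so it satisfies every identity u = v of V, in particular at
  the values of the r_i; this is the prolonged identity
  u(r_1, ..., r_n) = v(r_1, ..., r_n) in A.\<close>

lemma eval_subst: "eval F \<sigma> (subst \<rho> t) = eval F (\<lambda>i. eval F \<sigma> (\<rho> i)) t"
  by (induction t) (auto intro: arg_cong[where f = "F _"])

lemma eval_in_carrier:
  assumes "algebra ar A F" and "\<forall>i. \<sigma> i \<in> A" and "wf_trm ar t"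
  shows "eval F \<sigma> t \<in> A"
  using assms(3)
proof (induction t)
  case (Var i)
  then show ?case using assms(2) by simp
next
  case (Fn f ts)
  then have "set (map (eval F \<sigma>) ts) \<subseteq> A" by auto
  then show ?case using assms(1) Fn.prems unfolding algebra_def by simp
qed

lemma quot_ops_classes:
  assumes cong: "congruence ar A F \<theta>" and len: "length xs = ar f" and xs: "set xs \<subseteq> A"
  shows "quot_ops \<theta> F f (map (\<lambda>x. \<theta> `` {x}) xs) = \<theta> `` {F f xs}"
proof -
  have equiv: "equiv A \<theta>" using cong unfolding congruence_def by simp
  define ys where "ys = map (\<lambda>x. SOME y. y \<in> \<theta> `` {x}) xs"
  have rep: "(x, SOME y. y \<in> \<theta> `` {x}) \<in> \<theta>" if "x \<in> A" for x
  proof -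
    have "x \<in> \<theta> `` {x}" using equiv that by (rule equiv_class_self)
    then show ?thesis using someI[of "\<lambda>y. y \<in> \<theta> `` {x}"] by simp
  qed
  have related: "\<forall>i<ar f. (xs ! i, ys ! i) \<in> \<theta>"
    using rep xs len unfolding ys_def by (auto simp: subset_iff)
  have "set ys \<subseteq> A"
    using rep xs equiv unfolding ys_def equiv_def refl_on_def by auto
  then have "(F f xs, F f ys) \<in> \<theta>"
    using cong related len xs unfolding congruence_def ys_def by auto
  then have "\<theta> `` {F f ys} = \<theta> `` {F f xs}"
    using equiv by (metis equiv_class_eq)
  then show ?thesis unfolding quot_ops_def ys_def by (simp add: comp_def)
qed

lemma eval_quot_ops:
  assumes alg: "algebra ar A F" and cong: "congruence ar A F \<theta>"
    and \<sigma>: "\<forall>i. \<sigma> i \<in> A" and "wf_trm ar t"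
  shows "eval (quot_ops \<theta> F) (\<lambda>i. \<theta> `` {\<sigma> i}) t = \<theta> `` {eval F \<sigma> t}"
  using assms(4)
proof (induction t)
  case (Var i)
  then show ?case by simp
next
  case (Fn f ts)
  have "eval (quot_ops \<theta> F) (\<lambda>i. \<theta> `` {\<sigma> i}) (Fn f ts)
      = quot_ops \<theta> F f (map (\<lambda>x. \<theta> `` {x}) (map (eval F \<sigma>) ts))"
    using Fn.IH Fn.prems by (simp cong: list.map_cong)
  also have "\<dots> = \<theta> `` {F f (map (eval F \<sigma>) ts)}"
    by (rule quot_ops_classes[OF cong]) (use Fn.prems eval_in_carrier[OF alg \<sigma>] in auto)
  finally show ?case by simp
qed

lemma regular_identity_congruent:
  assumes alg: "algebra ar A F" and cong: "congruence ar A F \<theta>"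
    and S: "in_S ar (A // \<theta>) (quot_ops \<theta> F)" and \<sigma>: "\<forall>i. \<sigma> i \<in> A"
    and "wf_id ar (s, t)" and "regular (s, t)"
  shows "(eval F \<sigma> s, eval F \<sigma> t) \<in> \<theta>"
proof -
  have equiv: "equiv A \<theta>" using cong unfolding congruence_def by simp
  have wf: "wf_trm ar s" "wf_trm ar t" using assms(5) unfolding wf_id_def by auto
  have "\<forall>i. \<theta> `` {\<sigma> i} \<in> A // \<theta>" using \<sigma> by (simp add: quotientI)
  moreover have "satisfies (A // \<theta>) (quot_ops \<theta> F) (s, t)"
    using S assms(5,6) unfolding in_S_def by blast
  ultimately have "eval (quot_ops \<theta> F) (\<lambda>i. \<theta> `` {\<sigma> i}) s
                 = eval (quot_ops \<theta> F) (\<lambda>i. \<theta> `` {\<sigma> i}) t"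
    unfolding satisfies_def by auto
  then have "\<theta> `` {eval F \<sigma> s} = \<theta> `` {eval F \<sigma> t}"
    by (simp add: eval_quot_ops[OF alg cong \<sigma> wf(1)] eval_quot_ops[OF alg cong \<sigma> wf(2)])
  then show ?thesis
    using equiv eval_in_carrier[OF alg \<sigma> wf(2)] by (rule eq_equiv_class)
qed

lemma satisfies_prolong_m:
  fixes A :: "'a set"
  assumes alg: "algebra ar A F" and cong: "congruence ar A F \<theta>"
    and S: "in_S ar (A // \<theta>) (quot_ops \<theta> F)"
    and classes: "\<forall>X\<in>A // \<theta>. satisfies X F e"
    and "e' \<in> prolong_m ar m e"
  shows "satisfies A F e'"
  unfolding satisfies_def
proof (intro allI impI)
  obtain \<rho> where \<rho>: "\<forall>i. \<rho> i \<in> T ar m" and e': "e' = (subst \<rho> (fst e), subst \<rho> (snd e))"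
    using assms(5) unfolding prolong_m_def by blast
  have wf: "\<And>i. wf_trm ar (\<rho> i)" and vars: "\<And>i. vars (\<rho> i) = {..<m}"
    using \<rho> unfolding T_def by auto
  fix \<sigma> :: "nat \<Rightarrow> 'a"
  assume \<sigma>: "\<forall>i. \<sigma> i \<in> A"
  define X where "X = \<theta> `` {eval F \<sigma> (\<rho> 0)}"
  have "X \<in> A // \<theta>"
    unfolding X_def using eval_in_carrier[OF alg \<sigma> wf] by (simp add: quotientI)
  have "(eval F \<sigma> (\<rho> 0), eval F \<sigma> (\<rho> i)) \<in> \<theta>" for i
    using regular_identity_congruent[OF alg cong S \<sigma>] wf vars
    unfolding wf_id_def regular_def by simp
  then have "\<forall>i. eval F \<sigma> (\<rho> i) \<in> X" unfolding X_def by simp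
  moreover have "satisfies X F e" using classes \<open>X \<in> A // \<theta>\<close> by blast
  ultimately have "eval F (\<lambda>i. eval F \<sigma> (\<rho> i)) (fst e) = eval F (\<lambda>i. eval F \<sigma> (\<rho> i)) (snd e)"
    unfolding satisfies_def by simp
  then show "eval F \<sigma> (fst e') = eval F \<sigma> (snd e')"
    unfolding e' by (simp add: eval_subst)
qed

theorem proposition2p7:
  fixes ar :: "'f \<Rightarrow> nat" and \<Sigma> :: "'f identity set"
    and A :: "'a set" and F :: "'f \<Rightarrow> 'a list \<Rightarrow> 'a"
  assumes "plural ar"
    and "\<forall>e\<in>\<Sigma>. wf_id ar e"
    and "in_VoS ar \<Sigma> A F"
  shows "in_Vp ar \<Sigma> A F"
proof -
  obtain \<theta> where alg: "algebra ar A F" and cong: "congruence ar A F \<theta>"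
    and S: "in_S ar (A // \<theta>) (quot_ops \<theta> F)" and classes: "\<forall>X\<in>A // \<theta>. in_Var ar \<Sigma> X F"
    using assms(3) unfolding in_VoS_def by blast
  have "satisfies A F e'" if e'_prolong: "e' \<in> prolong ar (Id_V ar \<Sigma> TYPE('a))" for e'
  proof -
    obtain e m where e: "e \<in> Id_V ar \<Sigma> TYPE('a)" and e': "e' \<in> prolong_m ar m e"
      using e'_prolong unfolding prolong_def by blast
    have "\<forall>X\<in>A // \<theta>. satisfies X F e"
      using classes e unfolding Id_V_def by blast
    then show ?thesis using satisfies_prolong_m[OF alg cong S _ e'] by blast
  qed
  then show ?thesis using alg by (simp add: in_Vp_def models_def)
qed

end
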